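(* For every integer $n\ge2$, let $\mathbb{R}^{1,n}$ denote $(n+1)$-dimensional Minkowski space with its causal order. Then $\dim_{DM}(\mathbb{R}^{1,n})=\dim_{HBG}(\mathbb{R}^{1,n})=\aleph_0$, and for all $p,q\in\mathbb{R}^{1,n}$ with $p\ll q$ also $\dim_{DM}(J(p,q))=\dim_{HBG}(J(p,q))=\aleph_0$ (with the induced order). Moreover $\dim_D(\mathbb{R}^{1,n})\ge\aleph_0$ and $\dim_D(J(p,q))\ge\aleph_0$.
   Context: On $\mathbb{R}^{1,n}=\mathbb{R}\times\mathbb{R}^n$ the causal order is $x\le y$ iff $y_0-x_0\ge|\vec y-\vec x|$ (Euclidean norm of the spatial parts); $x\ll y$ iff $y_0-x_0>|\vec y-\vec x|$; $J(p,q):=\{x:p\le x\le q\}$. For a partially ordered set $(X,\le)$: the Dushnik–Miller dimension $\dim_{DM}(X)$ is the least cardinality of a family of total orders on $X$ whose intersection is $\le$. A utility on $X$ is a map $f:X\to\mathbb{R}^I$ with $x\le y\iff f_i(x)\le f_i(y)$ for all $i\in I$; the Hack–Braun–Gottwald dimension $\dim_{HBG}(X)$ is the least cardinality $\#I$ of a utility. A total order on $X$ is Debreu separable if there is a countable $N\subset X$ such that whenever $x\le y$ there is $n\in N$ with $x\le n\le y$; the Debreu dimension $\dim_D(X)$ is the least cardinality of a family of Debreu separable total orders on $X$ whose intersection is $\le$. *)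

theory Defs
  imports "HOL-Analysis.Analysis"
begin

definition DM_realizer :: "'a set \<Rightarrow> ('a \<Rightarrow> 'a \<Rightarrow> bool) \<Rightarrow> ('a \<times> 'a) set set \<Rightarrow> bool" where
  "DM_realizer X le F \<longleftrightarrow>
     (\<forall>R\<in>F. linear_order_on X R) \<and>
     (\<forall>x\<in>X. \<forall>y\<in>X. le x y \<longleftrightarrow> (\<forall>R\<in>F. (x, y) \<in> R))"

definition utility :: "'a set \<Rightarrow> ('a \<Rightarrow> 'a \<Rightarrow> bool) \<Rightarrow> ('a \<Rightarrow> real) set \<Rightarrow> bool" where
  "utility X le U \<longleftrightarrow> (\<forall>x\<in>X. \<forall>y\<in>X. le x y \<longleftrightarrow> (\<forall>u\<in>U. u x \<le> u y))"

definition Debreu_separable :: "'a set \<Rightarrow> ('a \<times> 'a) set \<Rightarrow> bool" where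
  "Debreu_separable X R \<longleftrightarrow>
     (\<exists>N. N \<subseteq> X \<and> countable N \<and>
        (\<forall>x\<in>X. \<forall>y\<in>X. (x, y) \<in> R \<and> x \<noteq> y \<longrightarrow> (\<exists>n\<in>N. (x, n) \<in> R \<and> (n, y) \<in> R)))"

definition Debreu_realizer :: "'a set \<Rightarrow> ('a \<Rightarrow> 'a \<Rightarrow> bool) \<Rightarrow> ('a \<times> 'a) set set \<Rightarrow> bool" where
  "Debreu_realizer X le F \<longleftrightarrow> DM_realizer X le F \<and> (\<forall>R\<in>F. Debreu_separable X R)"

text \<open>The least cardinality of a member of S equals aleph_0: some member is countably
  infinite and every member is infinite.\<close>
definition least_card_aleph0 :: "'b set set \<Rightarrow> bool" where
  "least_card_aleph0 S \<longleftrightarrow> (\<exists>A\<in>S. countable A \<and> infinite A) \<and> (\<forall>A\<in>S. infinite A)"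

definition least_card_ge_aleph0 :: "'b set set \<Rightarrow> bool" where
  "least_card_ge_aleph0 S \<longleftrightarrow> (\<forall>A\<in>S. infinite A)"

abbreviation dim_DM_eq_aleph0 :: "'a set \<Rightarrow> ('a \<Rightarrow> 'a \<Rightarrow> bool) \<Rightarrow> bool" where
  "dim_DM_eq_aleph0 X le \<equiv> least_card_aleph0 {F. DM_realizer X le F}"

abbreviation dim_HBG_eq_aleph0 :: "'a set \<Rightarrow> ('a \<Rightarrow> 'a \<Rightarrow> bool) \<Rightarrow> bool" where
  "dim_HBG_eq_aleph0 X le \<equiv> least_card_aleph0 {U. utility X le U}"

abbreviation dim_D_ge_aleph0 :: "'a set \<Rightarrow> ('a \<Rightarrow> 'a \<Rightarrow> bool) \<Rightarrow> bool" where
  "dim_D_ge_aleph0 X le \<equiv> least_card_ge_aleph0 {F. Debreu_realizer X le F}"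

definition causal_le :: "real \<times> (real^'n) \<Rightarrow> real \<times> (real^'n) \<Rightarrow> bool" where
  "causal_le x y \<longleftrightarrow> fst y - fst x \<ge> norm (snd y - snd x)"

definition chrono_less :: "real \<times> (real^'n) \<Rightarrow> real \<times> (real^'n) \<Rightarrow> bool" where
  "chrono_less x y \<longleftrightarrow> fst y - fst x > norm (snd y - snd x)"

definition causal_diamond :: "real \<times> (real^'n) \<Rightarrow> real \<times> (real^'n) \<Rightarrow> (real \<times> (real^'n)) set" where
  "causal_diamond p q = {x. causal_le p x \<and> causal_le x q}"

end

theory Submission
  imports Defs
begin

(* The functions x \<mapsto> x\<^sub>0 - \<langle>e, x\<rangle> with e ranging over a countable subset of the unit ball
   that norms every vector are monotone for the causal order and jointly detect it, so they
   form a countable utility; refining each of them lexicographically by time and a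
   well-ordering turns it into a countable realizer.
   Conversely, for k distinct unit vectors v i the events (0, v i) and (r, - v j), with
   r < 2 bounding every norm (v i + v j), i \<noteq> j, form the standard example S_k, and a scaled
   copy of it fits into every causal diamond with nonempty interior. A realizer or utility
   of S_k needs k members, so none of them can be finite. *)

definition contains_standard_examples :: "'a set \<Rightarrow> ('a \<Rightarrow> 'a \<Rightarrow> bool) \<Rightarrow> bool" where
  "contains_standard_examples X le \<longleftrightarrow>
     (\<forall>k::nat. \<exists>a b. (\<forall>i<k. a i \<in> X \<and> b i \<in> X)
        \<and> (\<forall>i<k. \<forall>j<k. i \<noteq> j \<longrightarrow> le (a i) (b j)) \<and> (\<forall>i<k. \<not> le (a i) (b i)))"

lemma contains_standard_examples_mono:
  assumes "contains_standard_examples X le" "X \<subseteq> Y"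
  shows "contains_standard_examples Y le"
  unfolding contains_standard_examples_def
proof
  fix k :: nat
  from assms(1) obtain a b where "\<forall>i<k. a i \<in> X \<and> b i \<in> X"
      "\<forall>i<k. \<forall>j<k. i \<noteq> j \<longrightarrow> le (a i) (b j)" "\<forall>i<k. \<not> le (a i) (b i)"
    unfolding contains_standard_examples_def by blast
  with assms(2) show "\<exists>a b. (\<forall>i<k. a i \<in> Y \<and> b i \<in> Y)
      \<and> (\<forall>i<k. \<forall>j<k. i \<noteq> j \<longrightarrow> le (a i) (b j)) \<and> (\<forall>i<k. \<not> le (a i) (b i))"
    by blast
qed

lemma contains_standard_examplesE:
  fixes k :: nat
  assumes "contains_standard_examples X le"
  obtains a b where "\<And>i. i < k \<Longrightarrow> a i \<in> X \<and> b i \<in> X"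
    "\<And>i j. i < k \<Longrightarrow> j < k \<Longrightarrow> i \<noteq> j \<Longrightarrow> le (a i) (b j)"
    "\<And>i. i < k \<Longrightarrow> \<not> le (a i) (b i)"
proof -
  from assms obtain a b where ab: "\<forall>i<k. a i \<in> X \<and> b i \<in> X"
      "\<forall>i<k. \<forall>j<k. i \<noteq> j \<longrightarrow> le (a i) (b j)" "\<forall>i<k. \<not> le (a i) (b i)"
    unfolding contains_standard_examples_def by blast
  then show thesis by (intro that[of a b]) auto
qed

lemma card_ge_if_separating:
  assumes "finite F" and "\<forall>i<k. \<exists>f\<in>F. P f i"
    and "\<And>f i j. f \<in> F \<Longrightarrow> i < k \<Longrightarrow> j < k \<Longrightarrow> P f i \<Longrightarrow> P f j \<Longrightarrow> i = j"
  shows "k \<le> card F"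
proof -
  obtain g where g: "\<And>i. i < k \<Longrightarrow> g i \<in> F \<and> P (g i) i" using assms(2) by metis
  have "inj_on g {..<k}"
  proof (rule inj_onI)
    fix i j assume "i \<in> {..<k}" "j \<in> {..<k}" "g i = g j"
    then show "i = j" using g[of i] g[of j] assms(3)[of "g i" i j] by simp
  qed
  moreover have "g ` {..<k} \<subseteq> F" using g by auto
  ultimately show ?thesis using card_inj_on_le[of g "{..<k}" F] assms(1) by simp
qed

lemma linear_order_on_flip:
  assumes "linear_order_on X R" "x \<in> X" "y \<in> X" "(x, y) \<notin> R"
  shows "(y, x) \<in> R"
proof -
  have "x \<noteq> y" using assms(1,2,4) by (auto simp: linear_order_on_def partial_order_on_def
      preorder_on_def refl_on_def)
  with assms show ?thesis by (auto simp: linear_order_on_def total_on_def)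
qed

text \<open>A member of a realizer reversing (a i, b i) cannot also reverse (a j, b j) for j \<noteq> i,
  as it would contain a i \<le> b j \<le> a j \<le> b i.\<close>

lemma DM_realizer_infinite:
  assumes F: "DM_realizer X le F" and S: "contains_standard_examples X le"
  shows "infinite F"
proof
  assume fin: "finite F"
  let ?k = "Suc (card F)"
  obtain a b where ab: "\<And>i. i < ?k \<Longrightarrow> a i \<in> X \<and> b i \<in> X"
      "\<And>i j. i < ?k \<Longrightarrow> j < ?k \<Longrightarrow> i \<noteq> j \<Longrightarrow> le (a i) (b j)"
      "\<And>i. i < ?k \<Longrightarrow> \<not> le (a i) (b i)"
    using contains_standard_examplesE[OF S, where k = ?k] by blast
  have lin: "\<And>R. R \<in> F \<Longrightarrow> linear_order_on X R"
    and eq: "\<And>x y. x \<in> X \<Longrightarrow> y \<in> X \<Longrightarrow> le x y \<longleftrightarrow> (\<forall>R\<in>F. (x, y) \<in> R)"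
    using F unfolding DM_realizer_def by auto
  have "?k \<le> card F"
  proof (rule card_ge_if_separating[OF fin, where P = "\<lambda>R i. (a i, b i) \<notin> R"])
    show "\<forall>i<?k. \<exists>R\<in>F. (a i, b i) \<notin> R"
    proof (intro allI impI)
      fix i assume "i < ?k"
      with ab(1,3) eq show "\<exists>R\<in>F. (a i, b i) \<notin> R" by auto
    qed
  next
    fix R i j assume R: "R \<in> F" and ij: "i < ?k" "j < ?k"
      and nR: "(a i, b i) \<notin> R" "(a j, b j) \<notin> R"
    show "i = j"
    proof (rule ccontr)
      assume "i \<noteq> j"
      then have "(a i, b j) \<in> R" "(a j, b i) \<in> R" using ab(1,2) ij eq R by auto
      moreover have "(b j, a j) \<in> R"
        using linear_order_on_flip[OF lin[OF R]] ab(1)[OF ij(2)] nR(2) by simp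
      moreover have "trans R"
        using lin[OF R] by (simp add: linear_order_on_def partial_order_on_def preorder_on_def)
      ultimately have "(a i, b i) \<in> R" by (meson transD)
      with nR show False by simp
    qed
  qed
  then show False by simp
qed

lemma utility_infinite:
  assumes U: "utility X le U" and S: "contains_standard_examples X le"
  shows "infinite U"
proof
  assume fin: "finite U"
  let ?k = "Suc (card U)"
  obtain a b where ab: "\<And>i. i < ?k \<Longrightarrow> a i \<in> X \<and> b i \<in> X"
      "\<And>i j. i < ?k \<Longrightarrow> j < ?k \<Longrightarrow> i \<noteq> j \<Longrightarrow> le (a i) (b j)"
      "\<And>i. i < ?k \<Longrightarrow> \<not> le (a i) (b i)"
    using contains_standard_examplesE[OF S, where k = ?k] by blast
  have eq: "\<And>x y. x \<in> X \<Longrightarrow> y \<in> X \<Longrightarrow> le x y \<longleftrightarrow> (\<forall>u\<in>U. u x \<le> u y)"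
    using U unfolding utility_def by auto
  have "?k \<le> card U"
  proof (rule card_ge_if_separating[OF fin, where P = "\<lambda>u i. u (b i) < u (a i)"])
    show "\<forall>i<?k. \<exists>u\<in>U. u (b i) < u (a i)"
    proof (intro allI impI)
      fix i assume "i < ?k"
      with ab(1,3) eq show "\<exists>u\<in>U. u (b i) < u (a i)" by (auto simp: not_le)
    qed
  next
    fix u i j assume u: "u \<in> U" and ij: "i < ?k" "j < ?k"
      and lt: "u (b i) < u (a i)" "u (b j) < u (a j)"
    show "i = j"
    proof (rule ccontr)
      assume "i \<noteq> j"
      then have "u (a i) \<le> u (b j)" "u (a j) \<le> u (b i)" using ab(1,2) ij eq u by auto
      with lt show False by linarith
    qed
  qed
  then show False by simp
qed

lemma dims_aleph0_if_standard_examples: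
  assumes S: "contains_standard_examples X le"
    and F: "DM_realizer X le F" "countable F" and U: "utility X le U" "countable U"
  shows "dim_DM_eq_aleph0 X le \<and> dim_HBG_eq_aleph0 X le \<and> dim_D_ge_aleph0 X le"
proof -
  have "\<forall>A\<in>{F. DM_realizer X le F}. infinite A" "\<forall>A\<in>{F. Debreu_realizer X le F}. infinite A"
    using DM_realizer_infinite[OF _ S] by (auto simp: Debreu_realizer_def)
  moreover have "\<forall>A\<in>{U. utility X le U}. infinite A" using utility_infinite[OF _ S] by auto
  moreover have "F \<in> {F. DM_realizer X le F}" "U \<in> {U. utility X le U}" using F U by auto
  ultimately show ?thesis
    unfolding least_card_aleph0_def least_card_ge_aleph0_def using F(2) U(2) by blast
qed

definition lex_order :: "'a set \<Rightarrow> ('a \<Rightarrow> real) \<Rightarrow> 'a rel \<Rightarrow> 'a rel" where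
  "lex_order X f W = {(x, y). x \<in> X \<and> y \<in> X \<and> (f x < f y \<or> f x = f y \<and> (x, y) \<in> W)}"

lemma linear_order_on_lex_order:
  assumes W: "linear_order_on Y W" and XY: "X \<subseteq> Y"
  shows "linear_order_on X (lex_order X f W)"
  unfolding linear_order_on_def partial_order_on_def preorder_on_def
proof (intro conjI)
  have "trans W" "antisym W" "refl_on Y W" "total_on Y W"
    using W by (auto simp: linear_order_on_def partial_order_on_def preorder_on_def)
  show "lex_order X f W \<subseteq> X \<times> X" unfolding lex_order_def by auto
  show "refl_on X (lex_order X f W)"
    using \<open>refl_on Y W\<close> XY unfolding lex_order_def refl_on_def by auto
  show "trans (lex_order X f W)"
  proof (rule transI)
    fix x y z assume "(x, y) \<in> lex_order X f W" "(y, z) \<in> lex_order X f W"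
    then have "x \<in> X" "z \<in> X" "f x \<le> f y" "f y \<le> f z"
      and "f x = f z \<Longrightarrow> (x, y) \<in> W \<and> (y, z) \<in> W"
      unfolding lex_order_def by auto
    then show "(x, z) \<in> lex_order X f W"
      using \<open>trans W\<close> unfolding lex_order_def by (auto dest: transD)
  qed
  show "antisym (lex_order X f W)"
  proof (rule antisymI)
    fix x y assume "(x, y) \<in> lex_order X f W" "(y, x) \<in> lex_order X f W"
    then have "(x, y) \<in> W" "(y, x) \<in> W" unfolding lex_order_def by auto
    with \<open>antisym W\<close> show "x = y" by (rule antisymD)
  qed
  show "total_on X (lex_order X f W)"
    using \<open>total_on Y W\<close> XY unfolding lex_order_def total_on_def by (auto simp: subset_iff)
qed

lemma DM_realizer_lex_order:
  assumes U: "utility X le U" and T: "linear_order_on X T"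
    and ext: "\<And>x y. x \<in> X \<Longrightarrow> y \<in> X \<Longrightarrow> le x y \<Longrightarrow> (x, y) \<in> T"
  shows "DM_realizer X le ((\<lambda>u. lex_order X u T) ` U)"
  unfolding DM_realizer_def
proof (intro conjI ballI)
  show "linear_order_on X R" if "R \<in> (\<lambda>u. lex_order X u T) ` U" for R
    using that linear_order_on_lex_order[OF T order_refl] by blast
next
  fix x y assume xy: "x \<in> X" "y \<in> X"
  have "(\<forall>R\<in>(\<lambda>u. lex_order X u T) ` U. (x, y) \<in> R) \<longleftrightarrow>
      (\<forall>u\<in>U. u x < u y \<or> u x = u y \<and> (x, y) \<in> T)"
    using xy by (simp add: lex_order_def)
  also have "\<dots> \<longleftrightarrow> le x y"
  proof
    assume "\<forall>u\<in>U. u x < u y \<or> u x = u y \<and> (x, y) \<in> T"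
    then have "\<forall>u\<in>U. u x \<le> u y" by auto
    with U xy show "le x y" unfolding utility_def by blast
  next
    assume "le x y"
    with U ext xy have "\<forall>u\<in>U. u x \<le> u y" "(x, y) \<in> T" unfolding utility_def by auto
    then show "\<forall>u\<in>U. u x < u y \<or> u x = u y \<and> (x, y) \<in> T" by (auto simp: order_le_less)
  qed
  finally show "le x y \<longleftrightarrow> (\<forall>R\<in>(\<lambda>u. lex_order X u T) ` U. (x, y) \<in> R)" ..
qed

lemma causal_le_imp_fst_le: "causal_le x y \<Longrightarrow> fst x \<le> fst y"
  unfolding causal_le_def using norm_ge_zero[of "snd y - snd x"] by linarith

lemma causal_le_fst_eq_imp_eq: "causal_le x y \<Longrightarrow> fst x = fst y \<Longrightarrow> x = y"
  unfolding causal_le_def by (simp add: prod_eq_iff)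

lemma causal_le_scale_translate:
  fixes m x y :: "real \<times> (real^'n)"
  assumes "l > 0"
  shows "causal_le (m + l *\<^sub>R x) (m + l *\<^sub>R y) \<longleftrightarrow> causal_le x y"
proof -
  have "snd (m + l *\<^sub>R y) - snd (m + l *\<^sub>R x) = l *\<^sub>R (snd y - snd x)"
    and "fst (m + l *\<^sub>R y) - fst (m + l *\<^sub>R x) = l * (fst y - fst x)"
    by (simp_all add: algebra_simps)
  then show ?thesis unfolding causal_le_def using assms by simp
qed

lemma countable_norming_set:
  obtains D :: "'a::{real_inner, second_countable_topology} set"
  where "countable D" "D \<subseteq> cball 0 1" "\<And>w t. t < norm w \<Longrightarrow> \<exists>e\<in>D. t < inner e w"
proof -
  obtain D :: "'a set" where D: "countable D" "\<And>V. open V \<Longrightarrow> V \<noteq> {} \<Longrightarrow> \<exists>d\<in>D. d \<in> V"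
    using countable_dense_exists by metis
  have "\<exists>e\<in>D \<inter> cball 0 1. t < inner e w" if wt: "t < norm w" for w :: 'a and t
  proof -
    define V where "V = ball 0 1 \<inter> {e. t < inner e w}"
    have "open V" unfolding V_def
      using open_halfspace_gt[of t w] by (simp add: inner_commute open_Int)
    moreover have "V \<noteq> {}"
    proof (cases "t < 0")
      case True
      then have "0 \<in> V" unfolding V_def by simp
      then show ?thesis by blast
    next
      case False
      with wt have w: "norm w > 0" by linarith
      define s where "s = (t / norm w + 1) / 2"
      have s: "0 \<le> s" "s < 1" "t < s * norm w"
        using False wt w unfolding s_def by (auto simp: field_simps)
      have "(s / norm w) *\<^sub>R w \<in> V"
        using s w unfolding V_def by (simp add: power2_norm_eq_inner[symmetric] power2_eq_square)
      then show ?thesis by blast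
    qed
    ultimately obtain d where "d \<in> D" "d \<in> V" using D(2) by blast
    then show ?thesis unfolding V_def by auto
  qed
  with D(1) show ?thesis by (intro that[of "D \<inter> cball 0 1"]) auto
qed

definition causal_utility :: "real^'n \<Rightarrow> real \<times> (real^'n) \<Rightarrow> real" where
  "causal_utility e x = fst x - inner e (snd x)"

lemma causal_le_iff_causal_utility:
  fixes D :: "(real^'n) set"
  assumes D: "D \<subseteq> cball 0 1" and norming: "\<And>w t. t < norm w \<Longrightarrow> \<exists>e\<in>D. t < inner e w"
  shows "causal_le x y \<longleftrightarrow> (\<forall>e\<in>D. causal_utility e x \<le> causal_utility e y)"
proof
  assume xy: "causal_le x y"
  show "\<forall>e\<in>D. causal_utility e x \<le> causal_utility e y"
  proof
    fix e assume "e \<in> D"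
    with D have "norm e \<le> 1" by auto
    have "inner e (snd y - snd x) \<le> norm e * norm (snd y - snd x)" by (rule norm_cauchy_schwarz)
    also have "\<dots> \<le> norm (snd y - snd x)" using \<open>norm e \<le> 1\<close> by (simp add: mult_left_le_one_le)
    also have "\<dots> \<le> fst y - fst x" using xy unfolding causal_le_def .
    finally show "causal_utility e x \<le> causal_utility e y"
      unfolding causal_utility_def by (simp add: inner_diff_right)
  qed
next
  assume all: "\<forall>e\<in>D. causal_utility e x \<le> causal_utility e y"
  show "causal_le x y"
  proof (rule ccontr)
    assume "\<not> causal_le x y"
    then obtain e where "e \<in> D" "fst y - fst x < inner e (snd y - snd x)"
      using norming unfolding causal_le_def by (meson not_le)
    with all show False unfolding causal_utility_def by (auto simp: inner_diff_right)
  qed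
qed

lemma countable_causal_utility:
  fixes X :: "(real \<times> (real^'n)) set"
  obtains U where "utility X causal_le U" "countable U"
proof -
  obtain D :: "(real^'n) set" where D: "countable D" "D \<subseteq> cball 0 1"
    "\<And>w t. t < norm w \<Longrightarrow> \<exists>e\<in>D. t < inner e w"
    using countable_norming_set by blast
  have "utility X causal_le (causal_utility ` D)"
    unfolding utility_def using causal_le_iff_causal_utility[OF D(2,3)] by simp
  with D(1) show ?thesis by (intro that) auto
qed

text \<open>Time followed by a well-ordering of the events extends the causal order linearly.\<close>

lemma countable_causal_realizer:
  fixes X :: "(real \<times> (real^'n)) set"
  obtains F where "DM_realizer X causal_le F" "countable F"
proof -
  obtain U where U: "utility X causal_le U" "countable U" by (rule countable_causal_utility)
  obtain W :: "(real \<times> (real^'n)) rel" where "Well_order W" "Field W = UNIV"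
    using well_ordering[where 'a = "real \<times> (real^'n)"] by blast
  then have W: "linear_order_on UNIV W" by (simp add: well_order_on_def)
  define T where "T = lex_order X fst W"
  have "linear_order_on X T" unfolding T_def by (rule linear_order_on_lex_order[OF W]) simp
  moreover have "(x, y) \<in> T" if "x \<in> X" "y \<in> X" "causal_le x y" for x y
  proof (cases "fst x = fst y")
    case True
    with that have "x = y" by (simp add: causal_le_fst_eq_imp_eq)
    moreover have "(x, x) \<in> W"
      using W by (auto simp: linear_order_on_def partial_order_on_def preorder_on_def intro: refl_onD)
    ultimately show ?thesis using that(1) unfolding T_def lex_order_def by simp
  next
    case False
    with causal_le_imp_fst_le[OF that(3)] that(1,2) show ?thesis
      unfolding T_def lex_order_def by simp
  qed
  ultimately have "DM_realizer X causal_le ((\<lambda>u. lex_order X u T) ` U)"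
    by (rule DM_realizer_lex_order[OF U(1)])
  with U(2) show ?thesis by (intro that) auto
qed

lemma midpoint_add_in_causal_diamond:
  fixes p q z :: "real \<times> (real^'n)"
  assumes "2 * (\<bar>fst z\<bar> + norm (snd z)) \<le> fst q - fst p - norm (snd q - snd p)"
  shows "midpoint p q + z \<in> causal_diamond p q"
proof -
  let ?x = "midpoint p q + z" and ?d = "(1/2) *\<^sub>R (snd q - snd p)"
  have d1: "snd ?x - snd p = ?d + snd z" and d2: "snd q - snd ?x = ?d - snd z"
    by (simp_all add: midpoint_def vec_eq_iff field_simps)
  have "norm (snd ?x - snd p) \<le> norm (snd q - snd p) / 2 + norm (snd z)"
    unfolding d1 using norm_triangle_ineq[of ?d "snd z"] by simp
  moreover have "norm (snd q - snd ?x) \<le> norm (snd q - snd p) / 2 + norm (snd z)"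
    unfolding d2 using norm_triangle_ineq4[of ?d "snd z"] by simp
  moreover have "fst ?x - fst p = (fst q - fst p) / 2 + fst z"
    and "fst q - fst ?x = (fst q - fst p) / 2 - fst z"
    by (simp_all add: midpoint_def field_simps)
  ultimately show ?thesis
    using assms unfolding causal_diamond_def causal_le_def by auto
qed

lemma exists_inj_unit_vectors:
  assumes "CARD('n::finite) \<ge> 2"
  obtains v :: "nat \<Rightarrow> real^'n" where "inj v" "\<And>i. norm (v i) = 1"
proof -
  obtain i1 i2 :: 'n where "i1 \<noteq> i2"
    using assms card_le_Suc0_iff_eq[of "UNIV :: 'n set"] by fastforce
  define t where "t n = 1 / (real n + 1)" for n
  define v where "v n = cos (t n) *\<^sub>R axis i1 1 + sin (t n) *\<^sub>R axis i2 (1::real)" for n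
  have inner_v: "inner (v n) (v n) = (cos (t n))\<^sup>2 + (sin (t n))\<^sup>2" for n
    unfolding v_def using \<open>i1 \<noteq> i2\<close>
    by (simp add: inner_add_left inner_add_right inner_axis_axis power2_eq_square)
  have "norm (v n) = 1" for n
    using inner_v[of n] by (simp add: norm_eq_sqrt_inner)
  moreover have "inj v"
  proof (rule injI)
    fix m n assume "v m = v n"
    then have "v m $ i1 = v n $ i1" by simp
    then have "cos (t m) = cos (t n)"
      using \<open>i1 \<noteq> i2\<close> unfolding v_def by (simp add: axis_def)
    moreover have "0 \<le> t k" "t k \<le> pi" for k
    proof -
      have "t k \<le> 1" unfolding t_def by (simp add: divide_le_eq)
      with pi_gt3 show "t k \<le> pi" by linarith
    qed (simp add: t_def)
    ultimately have "t m = t n" using cos_inj_pi by blast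
    then show "m = n" unfolding t_def by simp
  qed
  ultimately show ?thesis by (intro that) auto
qed

lemma norm_add_less_two:
  fixes x y :: "'a::real_inner"
  assumes "norm x = 1" "norm y = 1" "x \<noteq> y"
  shows "norm (x + y) < 2"
proof -
  have "inner x x = 1" "inner y y = 1"
    using assms(1,2) by (simp_all add: power2_norm_eq_inner[symmetric])
  then have "(norm (x + y))\<^sup>2 + (norm (x - y))\<^sup>2 = 4"
    by (simp add: power2_norm_eq_inner inner_add_left inner_add_right
        inner_diff_left inner_diff_right inner_commute)
  moreover have "(norm (x - y))\<^sup>2 > 0" using assms(3) by simp
  ultimately have "(norm (x + y))\<^sup>2 < 4" by linarith
  then have "(norm (x + y))\<^sup>2 < 2\<^sup>2" by simp
  then show ?thesis by (rule power2_less_imp_less) simp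
qed

lemma contains_standard_examples_causal_diamond:
  fixes p q :: "real \<times> (real^'n::finite)"
  assumes "CARD('n) \<ge> 2" and "chrono_less p q"
  shows "contains_standard_examples (causal_diamond p q) causal_le"
  unfolding contains_standard_examples_def
proof
  fix k :: nat
  obtain v :: "nat \<Rightarrow> real^'n" where v: "inj v" "\<And>i. norm (v i) = 1"
    using exists_inj_unit_vectors[OF assms(1)] by blast
  define S where "S = (\<lambda>(i, j). norm (v i + v j)) ` {(i, j). i < k \<and> j < k \<and> i \<noteq> j}"
  define r where "r = Max (insert 0 S)"
  have "finite S" unfolding S_def
    by (rule finite_imageI, rule finite_subset[of _ "{..<k} \<times> {..<k}"]) auto
  have "\<forall>s\<in>S. s < 2"
    unfolding S_def using norm_add_less_two[OF v(2) v(2)] inj_eq[OF v(1)] by auto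
  with \<open>finite S\<close> have r: "0 \<le> r" "r < 2" unfolding r_def by auto
  have r_ge: "norm (v i + v j) \<le> r" if "i < k" "j < k" "i \<noteq> j" for i j
  proof -
    have "norm (v i + v j) \<in> S" unfolding S_def using that by force
    with \<open>finite S\<close> show ?thesis unfolding r_def by simp
  qed
  define l where "l = (fst q - fst p - norm (snd q - snd p)) / 6"
  have l: "l > 0" using assms(2) unfolding chrono_less_def l_def by simp
  define a where "a i = midpoint p q + l *\<^sub>R (0, v i)" for i
  define b where "b j = midpoint p q + l *\<^sub>R (r, - v j)" for j
  have gap: "fst q - fst p - norm (snd q - snd p) = 6 * l" unfolding l_def by simp
  have "l * r \<le> l * 2" using l r by (intro mult_left_mono) auto
  then have "a i \<in> causal_diamond p q" "b i \<in> causal_diamond p q" for i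
    unfolding a_def b_def using l r v(2)
    by (auto intro!: midpoint_add_in_causal_diamond simp: gap abs_of_nonneg)
  moreover have "causal_le (a i) (b j) \<longleftrightarrow> norm (v i + v j) \<le> r" for i j
    unfolding a_def b_def causal_le_scale_translate[OF l]
    by (simp add: causal_le_def norm_minus_commute add.commute)
  moreover have "norm (v i + v i) = 2" for i
    using v(2)[of i] by (simp add: scaleR_2[symmetric])
  ultimately show "\<exists>a b. (\<forall>i<k. a i \<in> causal_diamond p q \<and> b i \<in> causal_diamond p q)
      \<and> (\<forall>i<k. \<forall>j<k. i \<noteq> j \<longrightarrow> causal_le (a i) (b j)) \<and> (\<forall>i<k. \<not> causal_le (a i) (b i))"
    using r_ge r(2) by (intro exI[of _ a] exI[of _ b]) auto
qed

theorem mainTheorem5: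
  assumes "CARD('n::finite) \<ge> 2"
  shows "dim_DM_eq_aleph0 (UNIV :: (real \<times> (real^'n)) set) causal_le
       \<and> dim_HBG_eq_aleph0 (UNIV :: (real \<times> (real^'n)) set) causal_le
       \<and> dim_D_ge_aleph0 (UNIV :: (real \<times> (real^'n)) set) causal_le
       \<and> (\<forall>p q :: real \<times> (real^'n). chrono_less p q \<longrightarrow>
            dim_DM_eq_aleph0 (causal_diamond p q) causal_le
          \<and> dim_HBG_eq_aleph0 (causal_diamond p q) causal_le
          \<and> dim_D_ge_aleph0 (causal_diamond p q) causal_le)"
proof -
  have dims: "dim_DM_eq_aleph0 X causal_le \<and> dim_HBG_eq_aleph0 X causal_le \<and> dim_D_ge_aleph0 X causal_le"
    if "contains_standard_examples X causal_le" for X :: "(real \<times> (real^'n)) set"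
  proof -
    obtain F where "DM_realizer X causal_le F" "countable F" by (rule countable_causal_realizer)
    moreover obtain U where "utility X causal_le U" "countable U" by (rule countable_causal_utility)
    ultimately show ?thesis by (rule dims_aleph0_if_standard_examples[OF that])
  qed
  have "chrono_less (0 :: real \<times> (real^'n)) (1, 0)" unfolding chrono_less_def by simp
  then have "contains_standard_examples (UNIV :: (real \<times> (real^'n)) set) causal_le"
    by (rule contains_standard_examples_mono[OF contains_standard_examples_causal_diamond[OF assms]]) simp
  with dims contains_standard_examples_causal_diamond[OF assms] show ?thesis by simp
qed

end
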